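(* Let $\alpha\in\mathbb{R}^n_{>0}$ be generic and let $i\ne j$ in $\{1,\dots,n\}$. Then the circle bundle $\widetilde{V}_j|_{X(\alpha)\setminus D_{i,j}(\alpha)}\to X(\alpha)\setminus D_{i,j}(\alpha)$ has a section.
   Context: $\alpha$ generic: $\sum_{i\in S}\alpha_i-\sum_{i\notin S}\alpha_i\ne0$ for every $S\subset\{1,\dots,n\}$. Hyperpolygon space: $(p,q)\in T^*\mathbb{C}^{2n}$ with $p_i=(a_i,b_i)$ row and $q_i=(c_i,d_i)^t$ column vectors in $\mathbb{C}^2$; $K=(SU(2)\times U(1)^n)/\mathbb{Z}_2$ acts by $(p,q)\cdot[A;e_1,\dots,e_n]=((e_i^{-1}p_iA)_i,(A^{-1}q_ie_i)_i)$; $\mu_{\mathbb{R}}(p,q)=\frac{\mathbf{i}}{2}\sum_i(q_iq_i^*-p_i^*p_i)_0\oplus(\tfrac12(|q_i|^2-|p_i|^2))_i$, $\mu_{\mathbb{C}}(p,q)=-\sum_i(q_ip_i)_0\oplus(\mathbf{i}p_iq_i)_i$ ($(\cdot)_0$ trace-free part); $X(\alpha)=(\mu_{\mathbb{R}}^{-1}(0,\alpha)\cap\mu_{\mathbb{C}}^{-1}(0,0))/K$. Identify $\mathbf{i}\,\mathfrak{su}(2)\cong\mathbb{R}^3$. Circle bundles: $\widetilde{Q}_j=\{(p,q)\in\mu_{\mathbb{R}}^{-1}(0,\alpha)\cap\mu_{\mathbb{C}}^{-1}(0):(q_jq_j^*-p_j^*p_j)_0=\mathrm{diag}(t,-t),\,t>0\}$;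 $\rho_{SO(3)}:K\to SO(3)$, $[A;e]\mapsto\mathrm{Ad}(A)$; $Q_j=\widetilde{Q}_j/\ker\rho_{SO(3)}$ is a principal $S^1/\{\pm1\}$-bundle over $X(\alpha)$ via $e^{\mathbf{i}t}\mapsto[\mathrm{diag}(e^{\mathbf{i}t},e^{-\mathbf{i}t});1,\dots,1]$; $L_j=Q_j\times_{\rho_j}\mathbb{C}$ with $\rho_j([A;e])=e_j^2$; $\widetilde{V}_j$ is the principal circle bundle associated to the dual line bundle $L_j^*$ (the circle acts by rotation about the axis of the vector $(q_jq_j^*-p_j^*p_j)_0$). $D_{i,j}(\alpha)$ is the set of $[p,q]\in X(\alpha)$ for which $(q_iq_i^*-p_i^*p_i)_0$ and $(q_jq_j^*-p_j^*p_j)_0$ are parallel as vectors in $\mathbb{R}^3$. *)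

theory Defs
  imports "HOL-Analysis.Analysis"
begin

text \<open>Points (p,q) of T^*C^{2n}: p i is the row vector p_i = (a_i,b_i), q i is the column
vector q_i = (c_i,d_i)^t, for i in {1..n}; coordinates outside {1..n} are required to be 0.\<close>
type_synonym hp = "(nat \<Rightarrow> complex^2) \<times> (nat \<Rightarrow> complex^2)"

text \<open>Elements [A; e_1,...,e_n] of K = (SU(2) x U(1)^n)/Z_2, represented by a pair (A,e).\<close>
type_synonym kel = "(complex^2^2) \<times> (nat \<Rightarrow> complex)"

definition cadj :: "complex^2^2 \<Rightarrow> complex^2^2" where
  "cadj A = (\<chi> r s. cnj (A $ s $ r))"

definition SU2 :: "(complex^2^2) set" where
  "SU2 = {A. A ** cadj A = mat 1 \<and> det A = 1}"

definition Kgrp :: "nat \<Rightarrow> kel set" where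
  "Kgrp n = {(A, e). A \<in> SU2 \<and> (\<forall>i\<in>{1..n}. cmod (e i) = 1)}"

definition kact :: "hp \<Rightarrow> kel \<Rightarrow> hp" where
  "kact pq k = (\<lambda>i. inverse (snd k i) *s (fst pq i v* fst k),
                \<lambda>i. snd k i *s (cadj (fst k) *v snd pq i))"

definition tf :: "complex^2^2 \<Rightarrow> complex^2^2" where
  "tf M = M - mat ((M$1$1 + M$2$2) / 2)"

definition colrow :: "complex^2 \<Rightarrow> complex^2 \<Rightarrow> complex^2^2" where
  "colrow x y = (\<chi> r s. x $ r * y $ s)"

definition Hmat :: "hp \<Rightarrow> nat \<Rightarrow> complex^2^2" where
  "Hmat pq i = (\<chi> r s. snd pq i $ r * cnj (snd pq i $ s)) - (\<chi> r s. cnj (fst pq i $ r) * fst pq i $ s)"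

definition rowcol :: "complex^2 \<Rightarrow> complex^2 \<Rightarrow> complex" where
  "rowcol x y = x$1 * y$1 + x$2 * y$2"

text \<open>The level set mu_R^{-1}(0,alpha) \<inter> mu_C^{-1}(0,0).  The real moment map is
 (i/2) sum_i (q_i q_i^* - p_i^* p_i)_0 (+) (1/2 (|q_i|^2-|p_i|^2))_i, the complex one
 - sum_i (q_i p_i)_0 (+) (i p_i q_i)_i.\<close>
definition levelset :: "nat \<Rightarrow> (nat \<Rightarrow> real) \<Rightarrow> hp set" where
  "levelset n \<alpha> = {pq. (\<forall>i. i \<notin> {1..n} \<longrightarrow> fst pq i = 0 \<and> snd pq i = 0)
     \<and> mat (\<i> / 2) ** (\<Sum>i\<in>{1..n}. tf (Hmat pq i)) = 0
     \<and> (\<forall>i\<in>{1..n}. (norm (snd pq i))\<^sup>2 / 2 - (norm (fst pq i))\<^sup>2 / 2 = \<alpha> i)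
     \<and> - (\<Sum>i\<in>{1..n}. tf (colrow (snd pq i) (fst pq i))) = 0
     \<and> (\<forall>i\<in>{1..n}. \<i> * rowcol (fst pq i) (snd pq i) = 0)}"

definition generic :: "nat \<Rightarrow> (nat \<Rightarrow> real) \<Rightarrow> bool" where
  "generic n \<alpha> \<longleftrightarrow> (\<forall>S\<subseteq>{1..n}. (\<Sum>i\<in>S. \<alpha> i) - (\<Sum>i\<in>{1..n}-S. \<alpha> i) \<noteq> 0)"

definition quot_top :: "'a topology \<Rightarrow> 'a set set \<Rightarrow> 'a set topology" where
  "quot_top T Q = topology (\<lambda>U. U \<subseteq> Q \<and> openin T (\<Union>U))"

definition Korbit :: "nat \<Rightarrow> hp \<Rightarrow> hp set" where
  "Korbit n pq = {kact pq k | k. k \<in> Kgrp n}"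

definition Xset :: "nat \<Rightarrow> (nat \<Rightarrow> real) \<Rightarrow> hp set set" where
  "Xset n \<alpha> = Korbit n ` levelset n \<alpha>"

definition Xtop :: "nat \<Rightarrow> (nat \<Rightarrow> real) \<Rightarrow> hp set topology" where
  "Xtop n \<alpha> = quot_top (top_of_set (levelset n \<alpha>)) (Xset n \<alpha>)"

text \<open>Two trace-free hermitian (up to i) matrices are parallel as vectors of i su(2) = R^3.\<close>
definition parallel :: "complex^2^2 \<Rightarrow> complex^2^2 \<Rightarrow> bool" where
  "parallel M N \<longleftrightarrow> (\<exists>c::real. M = c *\<^sub>R N) \<or> (\<exists>c::real. N = c *\<^sub>R M)"

definition Dset :: "nat \<Rightarrow> (nat \<Rightarrow> real) \<Rightarrow> nat \<Rightarrow> nat \<Rightarrow> hp set set" where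
  "Dset n \<alpha> i j = {x \<in> Xset n \<alpha>. \<exists>pq\<in>x. parallel (tf (Hmat pq i)) (tf (Hmat pq j))}"

definition rho :: "nat \<Rightarrow> kel \<Rightarrow> complex" where
  "rho j k = (snd k j)\<^sup>2"

text \<open>The unit circle bundle of L_j^*, where L_j = levelset \<times>_K C with K acting on C through rho_j:
 total space = (levelset \<times> S^1)/K, with (m,z) ~ (m.k, rho_j(k) z); projection [m,z] \<mapsto> [m].\<close>
definition Vorbit :: "nat \<Rightarrow> nat \<Rightarrow> hp \<times> complex \<Rightarrow> (hp \<times> complex) set" where
  "Vorbit n j mz = {(kact (fst mz) k, rho j k * snd mz) | k. k \<in> Kgrp n}"

definition Vset :: "nat \<Rightarrow> (nat \<Rightarrow> real) \<Rightarrow> nat \<Rightarrow> (hp \<times> complex) set set" where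
  "Vset n \<alpha> j = Vorbit n j ` (levelset n \<alpha> \<times> sphere 0 1)"

definition Vtop :: "nat \<Rightarrow> (nat \<Rightarrow> real) \<Rightarrow> nat \<Rightarrow> (hp \<times> complex) set topology" where
  "Vtop n \<alpha> j = quot_top (top_of_set (levelset n \<alpha> \<times> sphere 0 1)) (Vset n \<alpha> j)"

definition Vproj :: "(hp \<times> complex) set \<Rightarrow> hp set" where
  "Vproj v = fst ` v"

end

theory Submission
  imports Defs
begin

text \<open>The function f(p,q) = det(q_j, q_i) \<langle>q_i, q_j\<rangle> on the level set transforms under
  [A; e] \<in> K by the character rho_j = e_j^2, so (p,q) \<mapsto> [(p,q), f/|f|] is a continuous
  K-equivariant map into the total space of V_j wherever f \<noteq> 0, and it descends to a section
  over the image of that open saturated set. On the level set, p_i q_i = 0 makes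
  (q_i q_i^* - p_i^* p_i)_0 a positive multiple of (q_i q_i^*)_0, and these vectors of R^3 are
  parallel for i and j as soon as q_i and q_j are collinear or orthogonal. Hence f vanishes only
  over D_{i,j}(\<alpha>).\<close>

section \<open>Quotients by partitions\<close>

lemma openin_quot_top:
  assumes "disjoint Q"
  shows "openin (quot_top T Q) U \<longleftrightarrow> U \<subseteq> Q \<and> openin T (\<Union>U)"
proof -
  have "istopology (\<lambda>U. U \<subseteq> Q \<and> openin T (\<Union>U))"
    unfolding istopology_def
  proof (rule conjI; intro allI impI)
    fix S R assume S: "S \<subseteq> Q \<and> openin T (\<Union>S)" and R: "R \<subseteq> Q \<and> openin T (\<Union>R)"
    have "\<Union>(S \<inter> R) = \<Union>S \<inter> \<Union>R"
    proof
      show "\<Union>S \<inter> \<Union>R \<subseteq> \<Union>(S \<inter> R)"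
      proof
        fix x assume "x \<in> \<Union>S \<inter> \<Union>R"
        then obtain a b where "a \<in> S" "b \<in> R" "x \<in> a" "x \<in> b"
          by blast
        moreover from calculation have "a = b"
          using pairwiseD[OF assms, of a b] S R by (auto simp: disjnt_iff)
        ultimately show "x \<in> \<Union>(S \<inter> R)"
          by blast
      qed
    qed blast
    then show "S \<inter> R \<subseteq> Q \<and> openin T (\<Union>(S \<inter> R))"
      using S R by auto
  next
    fix \<K> assume K: "\<forall>U\<in>\<K>. U \<subseteq> Q \<and> openin T (\<Union>U)"
    have "\<Union>(\<Union>\<K>) = \<Union>(Union ` \<K>)"
      by blast
    moreover have "openin T (\<Union>(Union ` \<K>))"
      using K by (intro openin_Union) blast
    ultimately show "\<Union>\<K> \<subseteq> Q \<and> openin T (\<Union>(\<Union>\<K>))"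
      using K by auto
  qed
  then show ?thesis
    unfolding quot_top_def by simp
qed

lemma topspace_quot_top:
  assumes "disjoint Q" "\<Union>Q = topspace T"
  shows "topspace (quot_top T Q) = Q"
proof
  show "topspace (quot_top T Q) \<subseteq> Q"
    using openin_topspace[of "quot_top T Q"] unfolding openin_quot_top[OF assms(1)] by blast
  have "openin (quot_top T Q) Q"
    unfolding openin_quot_top[OF assms(1)] assms(2) by simp
  then show "Q \<subseteq> topspace (quot_top T Q)"
    by (rule openin_subset)
qed

text \<open>The openness of the saturated set \<Union>W is what makes the subspace W of the quotient carry
  the quotient topology of \<Union>W.\<close>

lemma continuous_map_quot_top:
  assumes Q: "disjoint Q" and R: "disjoint R" "\<Union>R = topspace S"
    and W: "W \<subseteq> Q" "openin T (\<Union>W)"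
    and g: "continuous_map (subtopology T (\<Union>W)) S g"
    and s: "\<And>a. a \<in> W \<Longrightarrow> s a \<in> R \<and> g ` a \<subseteq> s a"
  shows "continuous_map (subtopology (quot_top T Q) W) (quot_top S R) s"
proof -
  have W_open: "openin (quot_top T Q) W"
    using W by (simp add: openin_quot_top[OF Q])
  have topspace_W: "topspace (subtopology (quot_top T Q) W) = W"
    using openin_subset[OF W_open] by (simp add: Int_absorb1)
  have preimage_open: "openin (subtopology (quot_top T Q) W) {a \<in> W. s a \<in> U}"
    if U: "openin (quot_top S R) U" for U
  proof -
    have UR: "U \<subseteq> R" and U_open: "openin S (\<Union>U)"
      using U by (simp_all add: openin_quot_top[OF R(1)])
    have "\<Union>{a \<in> W. s a \<in> U} = {x \<in> topspace (subtopology T (\<Union>W)). g x \<in> \<Union>U}"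
    proof (intro equalityI subsetI)
      fix x assume "x \<in> \<Union>{a \<in> W. s a \<in> U}"
      then obtain a where a: "a \<in> W" "s a \<in> U" "x \<in> a"
        by blast
      have "x \<in> topspace T"
        using a openin_subset[OF W(2)] by blast
      moreover have "g x \<in> s a"
        using s[OF a(1)] a(3) by blast
      ultimately show "x \<in> {x \<in> topspace (subtopology T (\<Union>W)). g x \<in> \<Union>U}"
        using a by auto
    next
      fix x assume "x \<in> {x \<in> topspace (subtopology T (\<Union>W)). g x \<in> \<Union>U}"
      then obtain a r where a: "a \<in> W" "x \<in> a" and r: "r \<in> U" "g x \<in> r"
        by auto
      have sa: "g x \<in> s a" "s a \<in> R"
        using s[OF a(1)] a(2) by auto
      have "s a = r"
      proof (rule ccontr)
        assume "s a \<noteq> r"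
        then have "disjnt (s a) r"
          using pairwiseD[OF R(1) sa(2)] r(1) UR by blast
        then show False
          using sa(1) r(2) by (simp add: disjnt_iff)
      qed
      then show "x \<in> \<Union>{a \<in> W. s a \<in> U}"
        using a r by blast
    qed
    then have "openin T (\<Union>{a \<in> W. s a \<in> U})"
      using openin_trans_full[OF openin_continuous_map_preimage[OF g U_open] W(2)] by simp
    moreover have "{a \<in> W. s a \<in> U} \<subseteq> Q"
      using W(1) by blast
    ultimately show ?thesis
      unfolding openin_open_subtopology[OF W_open] openin_quot_top[OF Q] by blast
  qed
  have "s ` W \<subseteq> topspace (quot_top S R)"
    unfolding topspace_quot_top[OF R] using s by blast
  then show ?thesis
    unfolding continuous_map topspace_W using preimage_open by simp
qed

section \<open>The group K and its actions\<close>

lemmas mat2_simps = vec_eq_iff forall_2 sum_2 matrix_matrix_mult_def matrix_vector_mult_def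
  vector_matrix_mult_def mat_def cadj_def

lemma cadj_mul: "cadj (A ** B) = cadj B ** (cadj A :: complex^2^2)"
  by (simp add: mat2_simps algebra_simps)

lemma cadj_cadj [simp]: "cadj (cadj A) = A"
  by (simp add: mat2_simps)

lemma cadj_one [simp]: "cadj (mat 1 :: complex^2^2) = mat 1"
  by (simp add: mat2_simps)

lemma det_cadj: "det (cadj A) = cnj (det (A::complex^2^2))"
  by (simp add: det_2 cadj_def)

lemma SU2_mul_cadj: "A \<in> SU2 \<Longrightarrow> A ** cadj A = mat 1"
  unfolding SU2_def by blast

lemma SU2_cadj_mul: "A \<in> SU2 \<Longrightarrow> cadj A ** A = mat 1"
  unfolding SU2_def using matrix_left_right_inverse by blast

lemma SU2_det: "A \<in> SU2 \<Longrightarrow> det A = 1"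
  unfolding SU2_def by blast

lemma SU2_mul: "A \<in> SU2 \<Longrightarrow> B \<in> SU2 \<Longrightarrow> A ** B \<in> SU2"
  unfolding SU2_def
  by (simp add: cadj_mul det_mul matrix_mul_assoc) (metis matrix_mul_assoc matrix_mul_rid)

lemma SU2_cadj: "A \<in> SU2 \<Longrightarrow> cadj A \<in> SU2"
  using SU2_cadj_mul[of A] unfolding SU2_def by (simp add: det_cadj)

lemma SU2_one: "mat 1 \<in> SU2"
  by (simp add: SU2_def)

definition kmul :: "kel \<Rightarrow> kel \<Rightarrow> kel" where
  "kmul k k' = (fst k ** fst k', \<lambda>i. snd k i * snd k' i)"

definition kinv :: "kel \<Rightarrow> kel" where
  "kinv k = (cadj (fst k), \<lambda>i. inverse (snd k i))"

definition kone :: kel where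
  "kone = (mat 1, \<lambda>i. 1)"

lemma Kgrp_kmul: "k \<in> Kgrp n \<Longrightarrow> k' \<in> Kgrp n \<Longrightarrow> kmul k k' \<in> Kgrp n"
  by (auto simp: Kgrp_def kmul_def SU2_mul norm_mult)

lemma Kgrp_kinv: "k \<in> Kgrp n \<Longrightarrow> kinv k \<in> Kgrp n"
  by (auto simp: Kgrp_def kinv_def SU2_cadj norm_inverse)

lemma Kgrp_kone: "kone \<in> Kgrp n"
  by (auto simp: Kgrp_def kone_def SU2_one)

lemma Kgrp_SU2: "k \<in> Kgrp n \<Longrightarrow> fst k \<in> SU2"
  unfolding Kgrp_def by auto

lemma Kgrp_norm: "k \<in> Kgrp n \<Longrightarrow> i \<in> {1..n} \<Longrightarrow> cmod (snd k i) = 1"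
  unfolding Kgrp_def by auto

lemma Kgrp_nonzero: "k \<in> Kgrp n \<Longrightarrow> i \<in> {1..n} \<Longrightarrow> snd k i \<noteq> 0"
  using Kgrp_norm by fastforce

lemma scaleR_vector_matrix: "(c *s x) v* (A::complex^2^2) = c *s (x v* A)"
  by (simp add: mat2_simps algebra_simps)

lemma matrix_vector_scaleR: "(A::complex^2^2) *v (c *s x) = c *s (A *v x)"
  by (simp add: mat2_simps algebra_simps)

lemma kact_kact: "kact (kact m k) k' = kact m (kmul k k')"
  unfolding kact_def kmul_def
  by (simp add: scaleR_vector_matrix matrix_vector_scaleR vector_matrix_mul_assoc
      matrix_vector_mul_assoc cadj_mul mult.commute)

lemma kact_kone: "kact m kone = m"
  unfolding kact_def kone_def by simp

text \<open>Points of the level set vanish outside {1..n}, whereas the U(1)-factors of K are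
  unconstrained there; the inverse action only undoes the action on such points.\<close>
definition supported :: "nat \<Rightarrow> hp \<Rightarrow> bool" where
  "supported n pq \<longleftrightarrow> (\<forall>i. i \<notin> {1..n} \<longrightarrow> fst pq i = 0 \<and> snd pq i = 0)"

lemma kact_kinv:
  assumes m: "supported n m" and k: "k \<in> Kgrp n"
  shows "kact (kact m k) (kinv k) = m"
proof -
  have "inverse (snd k i * inverse (snd k i)) *s fst m i = fst m i"
    and "(snd k i * inverse (snd k i)) *s snd m i = snd m i" for i
    using Kgrp_nonzero[OF k, of i] m by (cases "i \<in> {1..n}"; simp add: supported_def)+
  moreover have "kmul k (kinv k) = (mat 1, \<lambda>i. snd k i * inverse (snd k i))"
    using SU2_mul_cadj[OF Kgrp_SU2[OF k]] by (simp add: kmul_def kinv_def)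
  ultimately show ?thesis
    unfolding kact_kact by (simp add: kact_def)
qed

lemma rho_kmul: "rho j (kmul k k') = rho j k * rho j k'"
  by (simp add: rho_def kmul_def power_mult_distrib)

lemma rho_kinv: "k \<in> Kgrp n \<Longrightarrow> j \<in> {1..n} \<Longrightarrow> rho j (kinv k) * rho j k = 1"
  using Kgrp_nonzero[of k n j] by (simp add: rho_def kinv_def power_mult_distrib[symmetric])

lemma rho_kone: "rho j kone = 1"
  by (simp add: rho_def kone_def)

lemma norm_rho: "k \<in> Kgrp n \<Longrightarrow> j \<in> {1..n} \<Longrightarrow> cmod (rho j k) = 1"
  using Kgrp_norm by (simp add: rho_def norm_power)

lemma orbit_eq_if_mem:
  fixes act :: "'x \<Rightarrow> kel \<Rightarrow> 'x"
  assumes act_act: "\<And>x k k'. act (act x k) k' = act x (kmul k k')"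
    and act_kinv: "\<And>k. k \<in> Kgrp n \<Longrightarrow> act (act x k) (kinv k) = x"
    and y: "y \<in> {act x k |k. k \<in> Kgrp n}"
  shows "{act y k |k. k \<in> Kgrp n} = {act x k |k. k \<in> Kgrp n}"
proof -
  have sub: "{act y' k |k. k \<in> Kgrp n} \<subseteq> {act x' k |k. k \<in> Kgrp n}"
    if y'_mem: "y' \<in> {act x' k |k. k \<in> Kgrp n}" for x' y'
  proof
    fix z assume "z \<in> {act y' k |k. k \<in> Kgrp n}"
    then obtain k k' where "k \<in> Kgrp n" "k' \<in> Kgrp n" "z = act x' (kmul k k')"
      using y'_mem act_act by blast
    then show "z \<in> {act x' k |k. k \<in> Kgrp n}"
      using Kgrp_kmul by blast
  qed
  obtain k where k: "k \<in> Kgrp n" "y = act x k"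
    using y by blast
  then have "x = act y (kinv k)" "kinv k \<in> Kgrp n"
    using act_kinv Kgrp_kinv by simp_all
  then have "x \<in> {act y k |k. k \<in> Kgrp n}"
    by blast
  then show ?thesis
    using sub[OF y] sub by blast
qed

lemma disjoint_orbits:
  fixes act :: "'x \<Rightarrow> kel \<Rightarrow> 'x"
  assumes act_act: "\<And>x k k'. act (act x k) k' = act x (kmul k k')"
    and act_kinv: "\<And>x k. x \<in> D \<Longrightarrow> k \<in> Kgrp n \<Longrightarrow> act (act x k) (kinv k) = x"
  shows "disjoint ((\<lambda>x. {act x k |k. k \<in> Kgrp n}) ` D)"
proof (rule pairwiseI)
  fix a b assume a: "a \<in> (\<lambda>x. {act x k |k. k \<in> Kgrp n}) ` D"
    and b: "b \<in> (\<lambda>x. {act x k |k. k \<in> Kgrp n}) ` D" and "a \<noteq> b"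
  show "disjnt a b"
  proof (rule ccontr)
    assume "\<not> disjnt a b"
    then obtain c where c: "c \<in> a" "c \<in> b" by (auto simp: disjnt_def)
    obtain x y where x: "x \<in> D" "a = {act x k |k. k \<in> Kgrp n}"
      and y: "y \<in> D" "b = {act y k |k. k \<in> Kgrp n}"
      using a b by blast
    have "{act c k |k. k \<in> Kgrp n} = a"
      using c(1) x orbit_eq_if_mem[OF act_act act_kinv[OF x(1)]] by simp
    moreover have "{act c k |k. k \<in> Kgrp n} = b"
      using c(2) y orbit_eq_if_mem[OF act_act act_kinv[OF y(1)]] by simp
    ultimately show False
      using \<open>a \<noteq> b\<close> by simp
  qed
qed

definition vact :: "nat \<Rightarrow> hp \<times> complex \<Rightarrow> kel \<Rightarrow> hp \<times> complex" where
  "vact j mz k = (kact (fst mz) k, rho j k * snd mz)"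

lemma Vorbit_vact: "Vorbit n j mz = {vact j mz k |k. k \<in> Kgrp n}"
  unfolding Vorbit_def vact_def ..

lemma vact_vact: "vact j (vact j mz k) k' = vact j mz (kmul k k')"
  by (simp add: vact_def kact_kact rho_kmul)

lemma vact_kinv:
  "supported n (fst mz) \<Longrightarrow> k \<in> Kgrp n \<Longrightarrow> j \<in> {1..n} \<Longrightarrow> vact j (vact j mz k) (kinv k) = mz"
  by (simp add: vact_def kact_kinv mult.assoc[symmetric] rho_kinv)

lemma mem_Korbit_self: "m \<in> Korbit n m"
  unfolding Korbit_def using kact_kone Kgrp_kone by (metis (mono_tags, lifting) mem_Collect_eq)

lemma mem_Vorbit_self: "mz \<in> Vorbit n j mz"
proof -
  have "mz = vact j mz kone"
    by (simp add: vact_def kact_kone rho_kone)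
  then show ?thesis
    unfolding Vorbit_vact using Kgrp_kone[of n] by blast
qed

lemma Vproj_Vorbit: "Vproj (Vorbit n j (m, w)) = Korbit n m"
  unfolding Vproj_def Vorbit_def Korbit_def by force

definition hmom :: "complex^2 \<Rightarrow> complex^2 \<Rightarrow> complex^2^2" where
  "hmom p q = (\<chi> r s. q $ r * cnj (q $ s)) - (\<chi> r s. cnj (p $ r) * p $ s)"

lemma Hmat_hmom: "Hmat pq i = hmom (fst pq i) (snd pq i)"
  by (simp add: Hmat_def hmom_def)

definition hip :: "complex^2 \<Rightarrow> complex^2 \<Rightarrow> complex" where
  "hip x y = cnj (x$1) * y$1 + cnj (x$2) * y$2"

lemma of_real_norm_square: "complex_of_real ((norm x)\<^sup>2) = hip x x"
proof -
  have "(norm x)\<^sup>2 = (cmod (x$1))\<^sup>2 + (cmod (x$2))\<^sup>2"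
    by (simp add: norm_vec_def L2_set_def sum_2)
  then have "complex_of_real ((norm x)\<^sup>2)
      = complex_of_real ((cmod (x$1))\<^sup>2) + complex_of_real ((cmod (x$2))\<^sup>2)"
    by simp
  then show ?thesis
    by (simp only: hip_def complex_norm_square mult.commute)
qed

lemma norm_eq_iff_hip: "norm x = norm y \<longleftrightarrow> hip x x = hip y y"
  by (metis of_real_norm_square of_real_eq_iff norm_ge_zero power2_eq_iff_nonneg)

lemma hmom_scale:
  assumes "c * cnj c = 1"
  shows "hmom (inverse c *s p) (c *s q) = hmom p q"
proof -
  have inv: "inverse c = cnj c"
    using assms by (metis inverse_unique)
  then have "cnj (inverse c) = c"
    by simp
  then show ?thesis
    using assms by (simp add: hmom_def mat2_simps algebra_simps)
      (simp add: inv mult.assoc[symmetric] mult.commute[of _ c])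
qed

lemma hmom_conj: "hmom (p v* A) (cadj A *v q) = cadj A ** hmom p q ** A"
  by (simp add: hmom_def mat2_simps algebra_simps)

lemma colrow_scale: "c \<noteq> 0 \<Longrightarrow> colrow (c *s q) (inverse c *s p) = colrow q p"
  by (simp add: colrow_def mat2_simps)

lemma colrow_conj: "colrow (cadj A *v q) (p v* A) = cadj A ** colrow q p ** A"
  by (simp add: colrow_def mat2_simps algebra_simps)

lemma rowcol_scale: "c \<noteq> 0 \<Longrightarrow> rowcol (inverse c *s p) (c *s q) = rowcol p q"
  by (simp add: rowcol_def field_simps)

lemma rowcol_matrix: "rowcol (p v* A) (B *v q) = rowcol p ((A ** B) *v q)"
  for A B :: "complex^2^2"
  by (simp add: rowcol_def mat2_simps algebra_simps)

lemma hip_scale: "hip (a *s u) (b *s v) = cnj a * b * hip u v"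
  by (simp add: hip_def algebra_simps)

lemma hip_matrix_vector: "hip (B *v x) (B *v y) = hip x ((cadj B ** B) *v y)"
  by (simp add: hip_def mat2_simps algebra_simps)

lemma hip_vector_matrix: "hip (x v* A) (y v* A) = hip x (y v* (A ** cadj A))"
  by (simp add: hip_def mat2_simps algebra_simps)

lemma unit_mult_cnj: "cmod c = 1 \<Longrightarrow> c * cnj c = 1"
  by (metis complex_norm_square of_real_1 power_one)

lemma tf_eq: "tf M = M - mat (trace M / 2)"
  by (simp add: tf_def trace_def sum_2)

lemma tf_conj:
  assumes "B ** A = mat 1" "A ** B = mat 1"
  shows "tf (B ** M ** A) = B ** tf M ** (A::complex^2^2)"
proof -
  have "trace (B ** M ** A) = trace M"
    by (metis assms(2) matrix_mul_assoc matrix_mul_rid trace_mul_sym)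
  moreover have "B ** (M - mat c) ** A = B ** M ** A - mat c ** (B ** A)" for c
    by (simp add: mat2_simps algebra_simps)
  ultimately show ?thesis
    unfolding tf_eq assms(1) matrix_mul_rid by simp
qed

lemma sum_conj:
  fixes A B :: "complex^2^2" and f :: "'a \<Rightarrow> complex^2^2"
  shows "(\<Sum>i\<in>S. B ** f i ** A) = B ** (\<Sum>i\<in>S. f i) ** A"
proof (induction S rule: infinite_finite_induct)
  case (insert x F)
  moreover have "(B ** X + B ** Y) ** A = B ** X ** A + B ** Y ** A" for X Y :: "complex^2^2"
    by (simp add: mat2_simps algebra_simps)
  ultimately show ?case
    by (simp add: matrix_add_ldistrib)
qed simp_all

context
  fixes n :: nat and k :: kel and m :: hp and i :: nat
  assumes k: "k \<in> Kgrp n" and i: "i \<in> {1..n}"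
begin

private lemma fst_kact: "fst (kact m k) i = inverse (snd k i) *s (fst m i v* fst k)"
  and snd_kact: "snd (kact m k) i = snd k i *s (cadj (fst k) *v snd m i)"
  by (simp_all add: kact_def)

private lemma fst_k_unitary: "cadj (fst k) ** fst k = mat 1" "fst k ** cadj (fst k) = mat 1"
  using SU2_cadj_mul SU2_mul_cadj Kgrp_SU2[OF k] by auto

private lemma snd_k_unit: "snd k i * cnj (snd k i) = 1" "inverse (snd k i) * cnj (inverse (snd k i)) = 1"
  using unit_mult_cnj[OF Kgrp_norm[OF k i]] Kgrp_nonzero[OF k i]
  by (simp_all add: complex_cnj_inverse[symmetric] field_simps)

lemma tf_Hmat_kact: "tf (Hmat (kact m k) i) = cadj (fst k) ** tf (Hmat m i) ** fst k"
proof -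
  have "Hmat (kact m k) i = cadj (fst k) ** Hmat m i ** fst k"
    unfolding Hmat_hmom fst_kact snd_kact hmom_scale[OF snd_k_unit(1)] hmom_conj ..
  then show ?thesis
    using tf_conj[OF fst_k_unitary] by simp
qed

lemma tf_colrow_kact:
  "tf (colrow (snd (kact m k) i) (fst (kact m k) i)) = cadj (fst k) ** tf (colrow (snd m i) (fst m i)) ** fst k"
proof -
  have "colrow (snd (kact m k) i) (fst (kact m k) i) = cadj (fst k) ** colrow (snd m i) (fst m i) ** fst k"
    unfolding fst_kact snd_kact colrow_scale[OF Kgrp_nonzero[OF k i]] colrow_conj ..
  then show ?thesis
    using tf_conj[OF fst_k_unitary] by simp
qed

lemma norm_fst_kact: "norm (fst (kact m k) i) = norm (fst m i)"
  unfolding norm_eq_iff_hip fst_kact hip_scale snd_k_unit(2)[simplified mult.commute[of "inverse (snd k i)"]]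
  by (simp add: hip_vector_matrix fst_k_unitary)

lemma norm_snd_kact: "norm (snd (kact m k) i) = norm (snd m i)"
  unfolding norm_eq_iff_hip snd_kact hip_scale
  by (simp add: hip_matrix_vector fst_k_unitary mult.commute[of "cnj (snd k i)"] snd_k_unit(1))

lemma rowcol_kact: "rowcol (fst (kact m k) i) (snd (kact m k) i) = rowcol (fst m i) (snd m i)"
  unfolding fst_kact snd_kact rowcol_scale[OF Kgrp_nonzero[OF k i]] rowcol_matrix fst_k_unitary
  by simp

end

lemma supported_levelset: "m \<in> levelset n \<alpha> \<Longrightarrow> supported n m"
  by (simp add: levelset_def supported_def)

lemma supported_kact: "supported n m \<Longrightarrow> supported n (kact m k)"
  by (simp add: supported_def kact_def)

lemma mat_half_i_mult_eq_0: "mat (\<i> / 2) ** S = 0 \<longleftrightarrow> S = (0::complex^2^2)"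
  by (simp add: mat2_simps)

lemma levelset_kact:
  assumes m: "m \<in> levelset n \<alpha>" and k: "k \<in> Kgrp n"
  shows "kact m k \<in> levelset n \<alpha>"
proof -
  let ?A = "fst k"
  have "(\<Sum>i\<in>{1..n}. tf (Hmat (kact m k) i)) = (\<Sum>i\<in>{1..n}. cadj ?A ** tf (Hmat m i) ** ?A)"
    and "(\<Sum>i\<in>{1..n}. tf (colrow (snd (kact m k) i) (fst (kact m k) i)))
       = (\<Sum>i\<in>{1..n}. cadj ?A ** tf (colrow (snd m i) (fst m i)) ** ?A)"
    using tf_Hmat_kact[OF k] tf_colrow_kact[OF k] by (auto intro: sum.cong)
  then have "(\<Sum>i\<in>{1..n}. tf (Hmat (kact m k) i)) = cadj ?A ** (\<Sum>i\<in>{1..n}. tf (Hmat m i)) ** ?A"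
    and "(\<Sum>i\<in>{1..n}. tf (colrow (snd (kact m k) i) (fst (kact m k) i)))
       = cadj ?A ** (\<Sum>i\<in>{1..n}. tf (colrow (snd m i) (fst m i))) ** ?A"
    by (simp_all only: sum_conj)
  note sums = this
  have L: "mat (\<i> / 2) ** (\<Sum>i\<in>{1..n}. tf (Hmat m i)) = 0"
    "\<forall>i\<in>{1..n}. (norm (snd m i))\<^sup>2 / 2 - (norm (fst m i))\<^sup>2 / 2 = \<alpha> i"
    "- (\<Sum>i\<in>{1..n}. tf (colrow (snd m i) (fst m i))) = 0"
    "\<forall>i\<in>{1..n}. \<i> * rowcol (fst m i) (snd m i) = 0"
    using m by (simp_all add: levelset_def)
  show ?thesis
    unfolding levelset_def mem_Collect_eq
  proof (intro conjI)
    show "\<forall>i. i \<notin> {1..n} \<longrightarrow> fst (kact m k) i = 0 \<and> snd (kact m k) i = 0"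
      using supported_kact[OF supported_levelset[OF m]] by (simp add: supported_def)
    show "mat (\<i> / 2) ** (\<Sum>i\<in>{1..n}. tf (Hmat (kact m k) i)) = 0"
      using L(1) sums(1) by (simp add: mat_half_i_mult_eq_0)
    show "\<forall>i\<in>{1..n}. (norm (snd (kact m k) i))\<^sup>2 / 2 - (norm (fst (kact m k) i))\<^sup>2 / 2 = \<alpha> i"
      using L(2) norm_fst_kact[OF k] norm_snd_kact[OF k] by simp
    show "- (\<Sum>i\<in>{1..n}. tf (colrow (snd (kact m k) i) (fst (kact m k) i))) = 0"
      using L(3) sums(2) by simp
    show "\<forall>i\<in>{1..n}. \<i> * rowcol (fst (kact m k) i) (snd (kact m k) i) = 0"
      using L(4) rowcol_kact[OF k] by simp
  qed
qed

lemma Korbit_subset: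
  assumes m: "m \<in> levelset n \<alpha>"
  shows "Korbit n m \<subseteq> levelset n \<alpha>"
proof
  fix x assume "x \<in> Korbit n m"
  then obtain k where "k \<in> Kgrp n" "x = kact m k"
    unfolding Korbit_def by blast
  then show "x \<in> levelset n \<alpha>"
    using levelset_kact[OF m] by simp
qed

lemma Union_Xset: "\<Union>(Xset n \<alpha>) = levelset n \<alpha>"
proof
  show "\<Union>(Xset n \<alpha>) \<subseteq> levelset n \<alpha>"
    unfolding Xset_def using Korbit_subset by blast
  show "levelset n \<alpha> \<subseteq> \<Union>(Xset n \<alpha>)"
    unfolding Xset_def using mem_Korbit_self by blast
qed

lemma Vorbit_subset:
  assumes mz: "mz \<in> levelset n \<alpha> \<times> sphere 0 1" and j: "j \<in> {1..n}"
  shows "Vorbit n j mz \<subseteq> levelset n \<alpha> \<times> sphere 0 1"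
proof
  fix y assume "y \<in> Vorbit n j mz"
  then obtain k where k: "k \<in> Kgrp n" and y: "y = (kact (fst mz) k, rho j k * snd mz)"
    unfolding Vorbit_def by blast
  have "kact (fst mz) k \<in> levelset n \<alpha>"
    using levelset_kact[OF _ k] mz by (simp add: mem_Times_iff)
  moreover have "norm (rho j k * snd mz) = 1"
    using norm_rho[OF k j] mz by (simp add: mem_Times_iff norm_mult)
  ultimately show "y \<in> levelset n \<alpha> \<times> sphere 0 1"
    using y by simp
qed

lemma Union_Vset:
  assumes j: "j \<in> {1..n}"
  shows "\<Union>(Vset n \<alpha> j) = levelset n \<alpha> \<times> sphere 0 1"
proof
  show "\<Union>(Vset n \<alpha> j) \<subseteq> levelset n \<alpha> \<times> sphere 0 1"
    unfolding Vset_def using Vorbit_subset[OF _ j] by blast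
  show "levelset n \<alpha> \<times> sphere 0 1 \<subseteq> \<Union>(Vset n \<alpha> j)"
    unfolding Vset_def using mem_Vorbit_self by blast
qed

lemma disjoint_Xset: "disjoint (Xset n \<alpha>)"
  unfolding Xset_def Korbit_def
  using disjoint_orbits[where act = kact, OF kact_kact kact_kinv[OF supported_levelset]] .

lemma Korbit_eq_if_mem:
  assumes "m \<in> levelset n \<alpha>" "x \<in> Korbit n m"
  shows "Korbit n x = Korbit n m"
proof -
  have "kact (kact m k) (kinv k) = m" if "k \<in> Kgrp n" for k
    using kact_kinv[OF supported_levelset[OF assms(1)] that] .
  then show ?thesis
    using assms(2) unfolding Korbit_def by (rule orbit_eq_if_mem[where act = kact, OF kact_kact])
qed

lemma disjoint_Vset:
  assumes j: "j \<in> {1..n}"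
  shows "disjoint (Vset n \<alpha> j)"
proof -
  have "vact j (vact j mz k) (kinv k) = mz"
    if "mz \<in> levelset n \<alpha> \<times> sphere 0 1" "k \<in> Kgrp n" for mz k
  proof -
    have "supported n (fst mz)"
      using that(1) supported_levelset[of "fst mz" n \<alpha>] by (simp add: mem_Times_iff)
    then show ?thesis
      using vact_kinv[OF _ that(2) j] by blast
  qed
  then show ?thesis
    unfolding Vset_def Vorbit_vact using disjoint_orbits[where act = "vact j", OF vact_vact] by blast
qed

section \<open>Trace-free hermitian matrices\<close>

definition det2 :: "complex^2 \<Rightarrow> complex^2 \<Rightarrow> complex" where
  "det2 u v = u$1 * v$2 - u$2 * v$1"

definition tf_outer :: "complex^2 \<Rightarrow> complex^2^2" where
  "tf_outer u = tf (\<chi> r s. u $ r * cnj (u $ s))"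

lemma tf_outer_nth:
  "tf_outer u $ 1 $ 1 = u$1 * cnj (u$1) - (u$1 * cnj (u$1) + u$2 * cnj (u$2)) / 2"
  "tf_outer u $ 1 $ 2 = u$1 * cnj (u$2)"
  "tf_outer u $ 2 $ 1 = u$2 * cnj (u$1)"
  "tf_outer u $ 2 $ 2 = u$2 * cnj (u$2) - (u$1 * cnj (u$1) + u$2 * cnj (u$2)) / 2"
  by (simp_all add: tf_outer_def tf_def mat_def)

lemma tf_hmom_nth:
  "tf (hmom p q) $ 1 $ 1 = (q$1 * cnj (q$1) - cnj (p$1) * p$1)
     - ((q$1 * cnj (q$1) - cnj (p$1) * p$1) + (q$2 * cnj (q$2) - cnj (p$2) * p$2)) / 2"
  "tf (hmom p q) $ 1 $ 2 = q$1 * cnj (q$2) - cnj (p$1) * p$2"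
  "tf (hmom p q) $ 2 $ 1 = q$2 * cnj (q$1) - cnj (p$2) * p$1"
  "tf (hmom p q) $ 2 $ 2 = (q$2 * cnj (q$2) - cnj (p$2) * p$2)
     - ((q$1 * cnj (q$1) - cnj (p$1) * p$1) + (q$2 * cnj (q$2) - cnj (p$2) * p$2)) / 2"
  by (simp_all add: hmom_def tf_def mat_def)

lemma scaleR_eq_iff_nth:
  "(a::real) *\<^sub>R M = b *\<^sub>R (N::complex^2^2)
     \<longleftrightarrow> (\<forall>r s. of_real a * M $ r $ s = of_real b * N $ r $ s)"
  by (simp add: vec_eq_iff) (simp add: scaleR_conv_of_real)

text \<open>tf_outer u = (u u^*)_0 is the image of u under the Hopf map C^2 \<rightarrow> R^3; on the complex
  moment level p q = 0 the vector (q q^* - p^* p)_0 is a positive multiple of it.\<close>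

lemma tf_outer_collinear:
  assumes "det2 v u = 0"
  shows "(norm v)\<^sup>2 *\<^sub>R tf_outer u = (norm u)\<^sup>2 *\<^sub>R tf_outer v"
proof -
  have h: "v$1 * u$2 - v$2 * u$1 = 0"
    using assms by (simp add: det2_def)
  moreover have "cnj (v$1) * cnj (u$2) - cnj (v$2) * cnj (u$1) = 0"
    using arg_cong[OF h, of cnj] by simp
  ultimately have "\<forall>r s. hip v v * tf_outer u $ r $ s = hip u u * tf_outer v $ r $ s"
    unfolding forall_2 tf_outer_nth hip_def by (intro conjI; algebra)
  then show ?thesis
    unfolding scaleR_eq_iff_nth of_real_norm_square by simp
qed

lemma tf_outer_orthogonal:
  assumes "hip u v = 0"
  shows "(norm v)\<^sup>2 *\<^sub>R tf_outer u = (- (norm u)\<^sup>2) *\<^sub>R tf_outer v"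
proof -
  have h: "cnj (u$1) * v$1 + cnj (u$2) * v$2 = 0"
    using assms by (simp add: hip_def)
  moreover have "u$1 * cnj (v$1) + u$2 * cnj (v$2) = 0"
    using arg_cong[OF h, of cnj] by simp
  ultimately have "\<forall>r s. hip v v * tf_outer u $ r $ s = - hip u u * tf_outer v $ r $ s"
    unfolding forall_2 tf_outer_nth hip_def by (intro conjI; algebra)
  then show ?thesis
    unfolding scaleR_eq_iff_nth of_real_minus of_real_norm_square by simp
qed

lemma tf_hmom_eq_tf_outer:
  assumes "rowcol p q = 0"
  shows "(norm q)\<^sup>2 *\<^sub>R tf (hmom p q) = ((norm q)\<^sup>2 + (norm p)\<^sup>2) *\<^sub>R tf_outer q"
proof -
  have h: "p$1 * q$1 + p$2 * q$2 = 0"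
    using assms by (simp add: rowcol_def)
  moreover have "cnj (p$1) * cnj (q$1) + cnj (p$2) * cnj (q$2) = 0"
    using arg_cong[OF h, of cnj] by simp
  ultimately have "\<forall>r s. hip q q * tf (hmom p q) $ r $ s = (hip q q + hip p p) * tf_outer q $ r $ s"
    unfolding forall_2 tf_outer_nth tf_hmom_nth hip_def by (intro conjI; algebra)
  then show ?thesis
    unfolding scaleR_eq_iff_nth of_real_add of_real_norm_square by simp
qed

lemma scaleR_cancel_left_eq:
  assumes "a \<noteq> 0" "a *\<^sub>R X = b *\<^sub>R (Y::'a::real_vector)"
  shows "X = (b / a) *\<^sub>R Y"
proof -
  have "X = inverse a *\<^sub>R (a *\<^sub>R X)"
    using assms(1) by simp
  also have "\<dots> = (b / a) *\<^sub>R Y"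
    using assms(2) by (simp add: divide_inverse mult.commute)
  finally show ?thesis .
qed

lemma tf_Hmat_levelset:
  assumes "pq \<in> levelset n \<alpha>" "i \<in> {1..n}" "\<alpha> i > 0"
  shows "tf (Hmat pq i) = (((norm (snd pq i))\<^sup>2 + (norm (fst pq i))\<^sup>2) / (norm (snd pq i))\<^sup>2) *\<^sub>R tf_outer (snd pq i)"
    and "snd pq i \<noteq> 0"
proof -
  have rowcol: "rowcol (fst pq i) (snd pq i) = 0"
    and level: "(norm (snd pq i))\<^sup>2 / 2 - (norm (fst pq i))\<^sup>2 / 2 = \<alpha> i"
    using assms(1,2) by (simp_all add: levelset_def)
  have "(norm (snd pq i))\<^sup>2 > 0"
    using level assms(3) zero_le_power2[of "norm (fst pq i)"] by linarith
  then show "snd pq i \<noteq> 0"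
    by auto
  show "tf (Hmat pq i) = (((norm (snd pq i))\<^sup>2 + (norm (fst pq i))\<^sup>2) / (norm (snd pq i))\<^sup>2) *\<^sub>R tf_outer (snd pq i)"
    unfolding Hmat_hmom using scaleR_cancel_left_eq[OF _ tf_hmom_eq_tf_outer[OF rowcol]] \<open>(norm (snd pq i))\<^sup>2 > 0\<close>
    by simp
qed

lemma parallel_tf_Hmat:
  assumes pq: "pq \<in> levelset n \<alpha>" and i: "i \<in> {1..n}" "\<alpha> i > 0" and j: "j \<in> {1..n}" "\<alpha> j > 0"
    and degenerate: "det2 (snd pq j) (snd pq i) = 0 \<or> hip (snd pq i) (snd pq j) = 0"
  shows "parallel (tf (Hmat pq i)) (tf (Hmat pq j))"
proof -
  define u v where "u = snd pq i" and "v = snd pq j"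
  define ci cj where "ci = ((norm u)\<^sup>2 + (norm (fst pq i))\<^sup>2) / (norm u)\<^sup>2"
    and "cj = ((norm v)\<^sup>2 + (norm (fst pq j))\<^sup>2) / (norm v)\<^sup>2"
  have v: "v \<noteq> 0"
    using tf_Hmat_levelset(2)[OF pq j] by (simp add: v_def)
  have Hi: "tf (Hmat pq i) = ci *\<^sub>R tf_outer u" and Hj: "tf (Hmat pq j) = cj *\<^sub>R tf_outer v"
    using tf_Hmat_levelset(1)[OF pq i] tf_Hmat_levelset(1)[OF pq j] by (simp_all add: u_def v_def ci_def cj_def)
  have "cj \<noteq> 0"
    using v by (simp add: cj_def add_pos_nonneg)
  then have Hj': "tf_outer v = inverse cj *\<^sub>R tf (Hmat pq j)"
    using Hj by simp
  obtain c :: real where "tf_outer u = c *\<^sub>R tf_outer v"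
  proof (cases "det2 v u = 0")
    case True
    have "tf_outer u = ((norm u)\<^sup>2 / (norm v)\<^sup>2) *\<^sub>R tf_outer v"
      using scaleR_cancel_left_eq[OF _ tf_outer_collinear[OF True]] v by simp
    then show ?thesis by (rule that)
  next
    case False
    then have "hip u v = 0"
      using degenerate by (simp add: u_def v_def)
    then have "tf_outer u = (- (norm u)\<^sup>2 / (norm v)\<^sup>2) *\<^sub>R tf_outer v"
      using scaleR_cancel_left_eq[OF _ tf_outer_orthogonal] v by simp
    then show ?thesis by (rule that)
  qed
  then have "tf (Hmat pq i) = (ci * c * inverse cj) *\<^sub>R tf (Hmat pq j)"
    using Hi Hj' by simp
  then show ?thesis
    unfolding parallel_def by blast
qed

section \<open>The equivariant function and the section\<close>

text \<open>Under [A; e] both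
  factors are invariant under A and pick up e_j e_i resp. cnj e_i e_j, so the product transforms
  by the character rho_j.\<close>

definition dethip :: "nat \<Rightarrow> nat \<Rightarrow> hp \<Rightarrow> complex" where
  "dethip i j pq = det2 (snd pq j) (snd pq i) * hip (snd pq i) (snd pq j)"

lemma det2_matrix_vector: "det2 (B *v u) (B *v v) = det B * det2 u v" for B :: "complex^2^2"
  by (simp add: det2_def det_2 mat2_simps algebra_simps)

lemma det2_scale: "det2 (a *s u) (b *s v) = a * b * det2 u v"
  by (simp add: det2_def algebra_simps)

lemma dethip_kact:
  assumes k: "k \<in> Kgrp n" and i: "i \<in> {1..n}"
  shows "dethip i j (kact m k) = rho j k * dethip i j m"
proof -
  let ?B = "cadj (fst k)" and ?e = "snd k"
  have "det ?B = 1" "cadj ?B ** ?B = mat 1"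
    using Kgrp_SU2[OF k] SU2_mul_cadj by (simp_all add: det_cadj SU2_det)
  then have "dethip i j (kact m k) = ?e j * ?e i * cnj (?e i) * ?e j * dethip i j m"
    by (simp add: dethip_def kact_def det2_scale hip_scale det2_matrix_vector hip_matrix_vector)
  also have "\<dots> = rho j k * dethip i j m"
    using unit_mult_cnj[OF Kgrp_norm[OF k i]] by (simp add: rho_def power2_eq_square algebra_simps)
  finally show ?thesis .
qed

lemma continuous_on_dethip: "continuous_on UNIV (dethip i j)"
proof -
  have "continuous_on UNIV (\<lambda>pq::hp. snd pq l)" for l
    by (intro continuous_intros continuous_on_compose2[of UNIV "\<lambda>f. f l" UNIV snd]) simp_all
  then show ?thesis
    unfolding dethip_def det2_def hip_def by (intro continuous_intros)
qed

lemma dethip_nonzero: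
  assumes a: "a \<in> Xset n \<alpha> - Dset n \<alpha> i j" and pq: "pq \<in> a"
    and i: "i \<in> {1..n}" "\<alpha> i > 0" and j: "j \<in> {1..n}" "\<alpha> j > 0"
  shows "dethip i j pq \<noteq> 0"
proof
  assume "dethip i j pq = 0"
  then have "det2 (snd pq j) (snd pq i) = 0 \<or> hip (snd pq i) (snd pq j) = 0"
    by (simp add: dethip_def)
  moreover have "pq \<in> levelset n \<alpha>"
    using a pq Union_Xset by blast
  ultimately have "parallel (tf (Hmat pq i)) (tf (Hmat pq j))"
    using parallel_tf_Hmat i j by blast
  then show False
    using a pq by (auto simp: Dset_def)
qed

definition sgn_lift :: "nat \<Rightarrow> nat \<Rightarrow> hp \<Rightarrow> hp \<times> complex" where
  "sgn_lift i j pq = (pq, sgn (dethip i j pq))"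

lemma sgn_lift_kact:
  assumes "k \<in> Kgrp n" "i \<in> {1..n}" "j \<in> {1..n}"
  shows "sgn_lift i j (kact m k) = vact j (sgn_lift i j m) k"
proof -
  have "sgn (rho j k) = rho j k"
    using norm_rho[OF assms(1,3)] by (simp add: sgn_div_norm)
  then show ?thesis
    by (simp add: sgn_lift_def vact_def dethip_kact[OF assms(1,2)] sgn_mult)
qed

lemma dethip_kact_nonzero:
  assumes "k \<in> Kgrp n" "i \<in> {1..n}" "j \<in> {1..n}" "dethip i j m \<noteq> 0"
  shows "dethip i j (kact m k) \<noteq> 0"
proof -
  have "rho j k \<noteq> 0"
    using norm_rho[OF assms(1,3)] by auto
  then show ?thesis
    using dethip_kact[OF assms(1,2)] assms(4) by simp
qed

lemma Vset_section_nonvanishing: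
  fixes \<alpha> :: "nat \<Rightarrow> real"
  assumes i: "i \<in> {1..n}" and j: "j \<in> {1..n}"
  defines "W \<equiv> {a \<in> Xset n \<alpha>. \<forall>pq\<in>a. dethip i j pq \<noteq> 0}"
  shows "\<exists>s. continuous_map (subtopology (Xtop n \<alpha>) W) (Vtop n \<alpha> j) s \<and> (\<forall>a\<in>W. Vproj (s a) = a)"
proof -
  let ?L = "levelset n \<alpha>"
  define s where "s a = Vorbit n j (sgn_lift i j (SOME pq. pq \<in> a))" for a
  have W_Union: "\<Union>W = ?L \<inter> {pq. dethip i j pq \<noteq> 0}"
  proof (intro equalityI subsetI)
    fix pq assume "pq \<in> \<Union>W"
    then show "pq \<in> ?L \<inter> {pq. dethip i j pq \<noteq> 0}"
      using Union_Xset unfolding W_def by blast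
  next
    fix pq assume pq: "pq \<in> ?L \<inter> {pq. dethip i j pq \<noteq> 0}"
    have "\<forall>x\<in>Korbit n pq. dethip i j x \<noteq> 0"
      unfolding Korbit_def using dethip_kact_nonzero[OF _ i j] pq by blast
    then have "Korbit n pq \<in> W"
      using pq unfolding W_def Xset_def by blast
    then show "pq \<in> \<Union>W"
      using mem_Korbit_self by blast
  qed
  have W_open: "openin (top_of_set ?L) (\<Union>W)"
    unfolding W_Union openin_open
    using open_Collect_neq[OF continuous_on_dethip continuous_on_const] by blast
  have "continuous_on (\<Union>W) (sgn_lift i j)"
    unfolding sgn_lift_def W_Union
    by (intro continuous_intros continuous_on_subset[OF continuous_on_dethip]) auto
  moreover have "sgn_lift i j \<in> \<Union>W \<rightarrow> ?L \<times> sphere 0 1"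
    unfolding W_Union sgn_lift_def by (auto simp: norm_sgn)
  moreover have "subtopology (top_of_set ?L) (\<Union>W) = top_of_set (\<Union>W)"
    unfolding W_Union subtopology_subtopology by (simp add: Int_absorb1)
  ultimately have sgn_lift_cont:
    "continuous_map (subtopology (top_of_set ?L) (\<Union>W)) (top_of_set (?L \<times> sphere 0 1)) (sgn_lift i j)"
    by simp
  have s: "s a \<in> Vset n \<alpha> j \<and> sgn_lift i j ` a \<subseteq> s a \<and> Vproj (s a) = a" if a: "a \<in> W" for a
  proof -
    obtain m where m: "m \<in> ?L" "a = Korbit n m"
      using a unfolding W_def Xset_def by blast
    define x where "x = (SOME pq. pq \<in> a)"
    have "x \<in> a"
      unfolding x_def using m mem_Korbit_self by (metis someI)
    then have x: "x \<in> ?L" "a = Korbit n x" "dethip i j x \<noteq> 0"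
      using Korbit_subset[OF m(1)] Korbit_eq_if_mem[OF m(1)] a m(2) unfolding W_def by auto
    have "sgn_lift i j x \<in> ?L \<times> sphere 0 1"
      using x by (simp add: sgn_lift_def norm_sgn)
    then have "s a \<in> Vset n \<alpha> j"
      unfolding s_def x_def[symmetric] Vset_def by (rule imageI)
    moreover have "sgn_lift i j ` a \<subseteq> s a"
    proof
      fix y assume "y \<in> sgn_lift i j ` a"
      then obtain k where "k \<in> Kgrp n" "y = sgn_lift i j (kact x k)"
        using x(2) unfolding Korbit_def by blast
      then show "y \<in> s a"
        unfolding s_def x_def[symmetric] Vorbit_vact using sgn_lift_kact[OF _ i j] by blast
    qed
    moreover have "Vproj (s a) = a"
      unfolding s_def x_def[symmetric] sgn_lift_def Vproj_Vorbit using x(2) by simp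
    ultimately show ?thesis
      by blast
  qed
  have "continuous_map (subtopology (Xtop n \<alpha>) W) (Vtop n \<alpha> j) s"
    unfolding Xtop_def Vtop_def
  proof (rule continuous_map_quot_top[OF disjoint_Xset disjoint_Vset[OF j] _ _ W_open sgn_lift_cont])
    show "\<Union>(Vset n \<alpha> j) = topspace (top_of_set (?L \<times> sphere 0 1))"
      using Union_Vset[OF j] by simp
    show "W \<subseteq> Xset n \<alpha>"
      unfolding W_def by blast
    show "\<And>a. a \<in> W \<Longrightarrow> s a \<in> Vset n \<alpha> j \<and> sgn_lift i j ` a \<subseteq> s a"
      using s by blast
  qed
  then show ?thesis
    using s by blast
qed

theorem mainTheorem9:
  fixes n :: nat and \<alpha> :: "nat \<Rightarrow> real" and i j :: nat
  assumes pos: "\<forall>k\<in>{1..n}. \<alpha> k > 0"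
    and gen: "generic n \<alpha>"
    and ij: "i \<in> {1..n}" "j \<in> {1..n}" "i \<noteq> j"
  shows "\<exists>s. continuous_map (subtopology (Xtop n \<alpha>) (Xset n \<alpha> - Dset n \<alpha> i j)) (Vtop n \<alpha> j) s
             \<and> (\<forall>x\<in>Xset n \<alpha> - Dset n \<alpha> i j. Vproj (s x) = x)"
proof -
  let ?W = "{a \<in> Xset n \<alpha>. \<forall>pq\<in>a. dethip i j pq \<noteq> 0}"
  obtain s where s: "continuous_map (subtopology (Xtop n \<alpha>) ?W) (Vtop n \<alpha> j) s"
      "\<forall>a\<in>?W. Vproj (s a) = a"
    using Vset_section_nonvanishing[OF ij(1,2)] by blast
  have "Xset n \<alpha> - Dset n \<alpha> i j \<subseteq> ?W"
  proof
    fix a assume a: "a \<in> Xset n \<alpha> - Dset n \<alpha> i j"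
    have "dethip i j pq \<noteq> 0" if "pq \<in> a" for pq
      using dethip_nonzero[OF a that ij(1) _ ij(2)] pos ij(1,2) by simp
    then show "a \<in> ?W"
      using a by blast
  qed
  then have "continuous_map (subtopology (Xtop n \<alpha>) (Xset n \<alpha> - Dset n \<alpha> i j)) (Vtop n \<alpha> j) s"
    by (rule continuous_map_from_subtopology_mono[OF s(1)])
  then show ?thesis
    using s(2) \<open>Xset n \<alpha> - Dset n \<alpha> i j \<subseteq> ?W\<close> by blast
qed

end
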